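(* Fix $q\ge2$ and $z\in\mathbb Z$, and let $\Delta_n=\log_q n-\lceil\log_q n\rceil$. Then $$\lim_{n\to\infty}\frac{|\mathcal C_1(n,q,\lceil\log_q n\rceil+z)|}{\frac{q^n}{n}\big(\frac{q-1}{q}\big)^2 q^{\,\Delta_n-z-(\log_q e)(q-1)q^{\Delta_n-z-1}}}=1.$$
   Context: $\Sigma_q=\{0,\dots,q-1\}$. For integers $1\le k<n$, $\mathcal C_1(n,q,k)$ is the set of $\vec a\in\Sigma_q^n$ such that $a_1=\dots=a_k=0$, $a_{k+1}\ne0$, $a_n\ne0$, and $(a_{k+2},\dots,a_{n-1})$ contains no run of $k$ consecutive zeros. *)

theory Defs
  imports Complex_Main "HOL-Library.Sublist"
begin

text \<open>Words over \<Sigma>_q = {0,...,q-1} of length n are lists of naturals; position i (1-based)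
  of the paper is list index i-1.  C_1(n,q,k): a_1..a_k = 0, a_{k+1} \<noteq> 0, a_n \<noteq> 0, and
  (a_{k+2},...,a_{n-1}) contains no k consecutive zeros (as a contiguous sublist).
  The standing restriction 1 \<le> k < n is built in (set empty otherwise).\<close>

definition C1 :: "nat \<Rightarrow> nat \<Rightarrow> nat \<Rightarrow> nat list set" where
  "C1 n q k = {a. 1 \<le> k \<and> k < n \<and> length a = n \<and> set a \<subseteq> {0..<q}
      \<and> (\<forall>i<k. a ! i = 0) \<and> a ! k \<noteq> 0 \<and> a ! (n - 1) \<noteq> 0
      \<and> \<not> sublist (replicate k 0) (drop (k + 1) (take (n - 1) a))}"

end

theory Submission
  imports Defs
begin

text \<open>An element of C_1(n,q,k) is 0^k c w d with c, d nonzero and w a word of length m = n-k-2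
  without k consecutive zeros, so |C_1| = (q-1)^2 B(m), where B counts such words.  Tracking the
  current run of zeros gives B(m+1) = q B(m) - (q-1) B(m-k), so f(m) = B(m)/q^m satisfies
  f(m+1) = f(m) - e f(m-k) with e = (q-1)/q^(k+1).  As f loses only a fraction O(ke) of its value
  over a window of length k, f(m-k) = (1+O(ke)) f(m), and f(m) lies between
  (1-q^(-k)) (1-e(1+O(ke)))^(m-k) and (1-e)^(m-k).  For k = ceil(log_q n) + z the product n e
  equals ((q-1)/q) q^(Delta_n - z) and stays bounded while ke tends to 0, so B(m)/q^m exp(n e)
  tends to 1, which is the claim once the normalisation is unfolded.\<close>

section \<open>Words without a run of k zeros\<close>

definition words :: "nat \<Rightarrow> nat \<Rightarrow> nat list set" where
  "words q m = {xs. set xs \<subseteq> {0..<q} \<and> length xs = m}"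

lemma finite_words: "finite (words q m)"
  unfolding words_def by (rule finite_lists_length_eq) simp

lemma card_words: "card (words q m) = q ^ m"
  unfolding words_def by (subst card_lists_length_eq) auto

lemma card_words_Suc_filter:
  "card {xs \<in> words q (Suc m). P xs} = (\<Sum>c<q. card {xs \<in> words q m. P (c # xs)})"
proof -
  have "{xs \<in> words q (Suc m). P xs} = (\<Union>c<q. (#) c ` {xs \<in> words q m. P (c # xs)})"
    by (auto simp: words_def length_Suc_conv)
  also have "card \<dots> = (\<Sum>c<q. card ((#) c ` {xs \<in> words q m. P (c # xs)}))"
    by (rule card_UN_disjoint) (auto intro: finite_subset[OF _ finite_words])
  also have "\<dots> = (\<Sum>c<q. card {xs \<in> words q m. P (c # xs)})"
    by (intro sum.cong refl card_image) auto
  finally show ?thesis .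
qed

text \<open>An automaton for words free of k consecutive zeros; its state j is the length of the run
  of zeros just read.\<close>

fun zero_run_free :: "nat \<Rightarrow> nat \<Rightarrow> nat list \<Rightarrow> bool" where
  "zero_run_free k j [] = True"
| "zero_run_free k j (c # xs) =
     (if c = 0 then Suc j < k \<and> zero_run_free k (Suc j) xs else zero_run_free k 0 xs)"

lemma not_prefix_replicate_zero:
  assumes "j < k" "c \<noteq> 0"
  shows "\<not> prefix (replicate k (0::nat)) (replicate j 0 @ c # xs)"
proof
  assume "prefix (replicate k (0::nat)) (replicate j 0 @ c # xs)"
  then obtain zs where "replicate j 0 @ c # xs = replicate k 0 @ zs" by (auto simp: prefix_def)
  hence "(replicate j 0 @ c # xs) ! j = (replicate k 0 @ zs) ! j" by simp
  thus False using assms by (simp add: nth_append)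
qed

lemma sublist_replicate_zero_skip:
  assumes "j < k" "c \<noteq> 0"
  shows "sublist (replicate k (0::nat)) (replicate j 0 @ c # xs) \<longleftrightarrow> sublist (replicate k 0) xs"
  using assms
proof (induction j)
  case 0
  then show ?case using not_prefix_replicate_zero[of 0 k c xs] by (simp add: sublist_Cons_right)
next
  case (Suc j)
  then show ?case using not_prefix_replicate_zero[of "Suc j" k c xs]
    by (simp add: sublist_Cons_right del: replicate_Suc) (simp add: sublist_Cons_right)
qed

lemma zero_run_free_iff:
  "j < k \<Longrightarrow> zero_run_free k j xs \<longleftrightarrow> \<not> sublist (replicate k (0::nat)) (replicate j 0 @ xs)"
proof (induction xs arbitrary: j)
  case Nil
  then show ?case using sublist_length_le[of "replicate k (0::nat)" "replicate j 0"] by auto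
next
  case (Cons c xs)
  show ?case
  proof (cases "c = 0")
    case True
    have shift: "replicate j (0::nat) @ c # xs = replicate (Suc j) 0 @ xs"
      using True by (simp add: replicate_app_Cons_same)
    show ?thesis
    proof (cases "Suc j < k")
      case True
      have "zero_run_free k j (c # xs) = zero_run_free k (Suc j) xs" using True \<open>c = 0\<close> by simp
      then show ?thesis using Cons.IH[OF True] shift by metis
    next
      case False
      hence "Suc j = k" using Cons.prems by simp
      have "sublist (replicate k (0::nat)) (replicate k 0 @ xs)" by (rule prefix_imp_sublist) simp
      hence "sublist (replicate k (0::nat)) (replicate j 0 @ c # xs)" using shift \<open>Suc j = k\<close> by metis
      then show ?thesis using \<open>c = 0\<close> \<open>Suc j = k\<close> by simp
    qed
  next
    case False
    then show ?thesis using Cons.IH[of 0] Cons.prems sublist_replicate_zero_skip[of j k c xs] by simp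
  qed
qed

definition zero_run_free_count :: "nat \<Rightarrow> nat \<Rightarrow> nat \<Rightarrow> nat \<Rightarrow> nat" where
  "zero_run_free_count q k j m = card {xs \<in> words q m. zero_run_free k j xs}"

lemma zero_run_free_count_0: "zero_run_free_count q k j 0 = 1"
proof -
  have "{xs \<in> words q 0. zero_run_free k j xs} = {[]}" by (auto simp: words_def)
  thus ?thesis by (simp add: zero_run_free_count_def)
qed

lemma zero_run_free_count_Suc:
  assumes "q \<ge> 1"
  shows "zero_run_free_count q k j (Suc m) =
    (if Suc j < k then zero_run_free_count q k (Suc j) m else 0) + (q - 1) * zero_run_free_count q k 0 m"
proof -
  obtain q' where q: "q = Suc q'" using assms by (cases q) auto
  have "zero_run_free_count q k j (Suc m)
      = (\<Sum>c<q. card {xs \<in> words q m. zero_run_free k j (c # xs)})"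
    unfolding zero_run_free_count_def by (rule card_words_Suc_filter)
  also have "\<dots> = card {xs \<in> words q m. zero_run_free k j (0 # xs)}
      + (\<Sum>c<q'. card {xs \<in> words q m. zero_run_free k j (Suc c # xs)})"
    unfolding q by (rule sum.lessThan_Suc_shift)
  finally show ?thesis using q by (simp add: zero_run_free_count_def)
qed

lemma zero_run_free_count_unfold:
  assumes "q \<ge> 1" "j < k"
  shows "zero_run_free_count q k j m = (if m + j < k then 1 else 0)
    + (q - 1) * (\<Sum>i<min (k - j) m. zero_run_free_count q k 0 (m - 1 - i))"
  using assms(2)
proof (induction m arbitrary: j)
  case 0
  then show ?case by (simp add: zero_run_free_count_0)
next
  case (Suc m)
  show ?case
  proof (cases "Suc j < k")
    case True
    have min_Suc: "min (k - j) (Suc m) = Suc (min (k - Suc j) m)" using True by simp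
    have "zero_run_free_count q k j (Suc m)
        = zero_run_free_count q k (Suc j) m + (q - 1) * zero_run_free_count q k 0 m"
      using zero_run_free_count_Suc[OF assms(1)] True by simp
    also have "\<dots> = (if m + Suc j < k then 1 else 0)
        + (q - 1) * (\<Sum>i<min (k - Suc j) m. zero_run_free_count q k 0 (m - 1 - i))
        + (q - 1) * zero_run_free_count q k 0 m"
      using Suc.IH[OF True] by simp
    also have "\<dots> = (if Suc m + j < k then 1 else 0)
        + (q - 1) * (\<Sum>i<min (k - j) (Suc m). zero_run_free_count q k 0 (Suc m - 1 - i))"
      unfolding min_Suc sum.lessThan_Suc_shift by (simp add: algebra_simps)
    finally show ?thesis .
  next
    case False
    hence "Suc j = k" "k - j = 1" using Suc.prems by simp_all
    then show ?thesis using zero_run_free_count_Suc[OF assms(1), of k j m] by simp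
  qed
qed

lemma sublist_same_length: "sublist xs ys \<Longrightarrow> length xs = length ys \<Longrightarrow> xs = ys"
  by (auto simp: sublist_def)

definition run_avoiding :: "nat \<Rightarrow> nat \<Rightarrow> nat \<Rightarrow> nat" where
  "run_avoiding q k m = card {xs \<in> words q m. \<not> sublist (replicate k 0) xs}"

lemma run_avoiding_eq_count: "0 < k \<Longrightarrow> run_avoiding q k m = zero_run_free_count q k 0 m"
  unfolding run_avoiding_def zero_run_free_count_def using zero_run_free_iff[of 0 k] by simp

lemma run_avoiding_short: "m < k \<Longrightarrow> run_avoiding q k m = q ^ m"
proof -
  assume "m < k"
  hence "{xs \<in> words q m. \<not> sublist (replicate k 0) xs} = words q m"
    by (auto simp: words_def dest: sublist_length_le)
  thus ?thesis by (simp add: run_avoiding_def card_words)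
qed

lemma run_avoiding_self: "q \<ge> 1 \<Longrightarrow> run_avoiding q k k = q ^ k - 1"
proof -
  assume q: "q \<ge> 1"
  have "{xs \<in> words q k. \<not> sublist (replicate k 0) xs} = words q k - {replicate k 0}"
    by (auto simp: words_def dest: sublist_same_length)
  moreover have "replicate k 0 \<in> words q k" using q by (auto simp: words_def)
  ultimately show ?thesis by (simp add: run_avoiding_def card_words finite_words)
qed

lemma run_avoiding_recurrence:
  assumes "q \<ge> 1" "0 < k" "k \<le> m"
  shows "run_avoiding q k (Suc m) + (q - 1) * run_avoiding q k (m - k) = q * run_avoiding q k m"
proof -
  obtain k' where k: "k = Suc k'" using assms by (cases k) auto
  obtain q' where q: "q = Suc q'" using assms by (cases q) auto
  let ?B = "run_avoiding q k"
  have "?B m = (q - 1) * (\<Sum>i<k. ?B (m - 1 - i))"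
    using zero_run_free_count_unfold[OF assms(1,2), of m] assms by (simp add: run_avoiding_eq_count)
  also have "(\<Sum>i<k. ?B (m - 1 - i)) = (\<Sum>i<k'. ?B (m - 1 - i)) + ?B (m - k)"
    using assms k by simp
  finally have B_m: "?B m = (q - 1) * ((\<Sum>i<k'. ?B (m - 1 - i)) + ?B (m - k))" .
  have "?B (Suc m) = (q - 1) * (\<Sum>i<k. ?B (m - i))"
    using zero_run_free_count_unfold[OF assms(1,2), of "Suc m"] assms by (simp add: run_avoiding_eq_count)
  also have "(\<Sum>i<k. ?B (m - i)) = ?B m + (\<Sum>i<k'. ?B (m - 1 - i))"
    unfolding k sum.lessThan_Suc_shift by simp
  finally show ?thesis using B_m unfolding q by (simp add: algebra_simps)
qed

lemma C1_decompose:
  assumes "a \<in> C1 n q k" "k + 2 \<le> n"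
  obtains c d w where "a = replicate k 0 @ c # w @ [d]" "c \<in> {1..<q}" "d \<in> {1..<q}"
    "w \<in> words q (n - k - 2)" "\<not> sublist (replicate k 0) w"
proof -
  have len: "length a = n" and k: "1 \<le> k" "k + 2 \<le> n" and st: "set a \<subseteq> {0..<q}"
    and zeros: "\<forall>i<k. a ! i = 0" and ak: "a ! k \<noteq> 0" and an: "a ! (n - 1) \<noteq> 0"
    and free: "\<not> sublist (replicate k 0) (drop (k + 1) (take (n - 1) a))"
    using assms unfolding C1_def by auto
  define w where "w = drop (k + 1) (take (n - 1) a)"
  have "take k a = replicate k 0"
    using zeros len k by (intro nth_equalityI) auto
  moreover have "take (n - 1) a @ [a ! (n - 1)] = a"
    using take_Suc_conv_app_nth[of "n - 1" a] len k by simp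
  moreover have "drop k (take (n - 1) a) = a ! k # w"
    unfolding w_def using len k by (subst Cons_nth_drop_Suc[symmetric]) auto
  moreover have "take (n - 1) a = take k a @ drop k (take (n - 1) a)"
    using append_take_drop_id[of k "take (n - 1) a"] k by (simp add: min_absorb1)
  ultimately have "a = replicate k 0 @ a ! k # w @ [a ! (n - 1)]" by (metis append.assoc append_Cons)
  moreover have "a ! k \<in> set a" "a ! (n - 1) \<in> set a" using len k by auto
  moreover have "w \<in> words q (n - k - 2)" using st len k unfolding w_def words_def
    by (auto dest: in_set_dropD in_set_takeD)
  ultimately show ?thesis using that[of "a ! k" w "a ! (n - 1)"] st ak an free
    unfolding w_def by fastforce
qed

lemma C1_eq_image:
  assumes "1 \<le> k" "k + 2 \<le> n"
  shows "C1 n q k = (\<lambda>(c, d, w). replicate k 0 @ c # w @ [d]) `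
     ({1..<q} \<times> {1..<q} \<times> {w \<in> words q (n - k - 2). \<not> sublist (replicate k 0) w})"
    (is "_ = ?f ` ?A")
proof
  show "C1 n q k \<subseteq> ?f ` ?A"
  proof
    fix a assume "a \<in> C1 n q k"
    then obtain c d w where "a = replicate k 0 @ c # w @ [d]" "c \<in> {1..<q}" "d \<in> {1..<q}"
      "w \<in> words q (n - k - 2)" "\<not> sublist (replicate k 0) w"
      using assms(2) by (rule C1_decompose)
    then show "a \<in> ?f ` ?A" by (intro image_eqI[where x = "(c, d, w)"]) auto
  qed
  show "?f ` ?A \<subseteq> C1 n q k"
  proof clarify
    fix c d w assume c: "c \<in> {1..<q}" and d: "d \<in> {1..<q}"
      and w: "w \<in> words q (n - k - 2)" "\<not> sublist (replicate k 0) w"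
    let ?a = "replicate k 0 @ c # w @ [d]"
    have len_init: "length (replicate k 0 @ c # w) = n - 1" using w assms by (simp add: words_def)
    have "?a = (replicate k 0 @ c # w) @ [d]" by simp
    hence "?a ! (n - 1) = d" and "take (n - 1) ?a = replicate k 0 @ c # w"
      using len_init by (metis nth_append_length, metis append_eq_conv_conj)
    moreover have "set ?a \<subseteq> {0..<q}" using c d w by (auto simp: words_def)
    ultimately show "?a \<in> C1 n q k" using c d w len_init assms unfolding C1_def
      by (auto simp: nth_append)
  qed
qed

lemma card_C1:
  assumes "1 \<le> k" "k + 2 \<le> n"
  shows "card (C1 n q k) = (q - 1) ^ 2 * run_avoiding q k (n - k - 2)"
proof -
  have "inj_on (\<lambda>(c, d, w). replicate k (0::nat) @ c # w @ [d])
     ({1..<q} \<times> {1..<q} \<times> {w \<in> words q (n - k - 2). \<not> sublist (replicate k 0) w})"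
    by (auto simp: inj_on_def words_def)
  then show ?thesis unfolding C1_eq_image[OF assms]
    by (simp add: card_image card_cartesian_product run_avoiding_def power2_eq_square)
qed

section \<open>A lagged linear recurrence\<close>

lemma lag_factor_bound:
  fixes x :: real
  assumes "0 \<le> x" "x \<le> 1/20"
  shows "1 \<le> (1 + 4 * x) * (1 - 2 * x * (1 + 4 * x))"
proof -
  have "(1 + 4 * x) * (1 + 4 * x) \<le> 2"
    using assms mult_mono[of "1 + 4 * x" "6/5" "1 + 4 * x" "6/5"] by simp
  then have "x * ((1 + 4 * x) * (1 + 4 * x)) \<le> x * 2" using assms by (intro mult_left_mono)
  then show ?thesis by (simp add: algebra_simps)
qed

locale lagged_decay =
  fixes f :: "nat \<Rightarrow> real" and k :: nat and c e :: real
  assumes initial: "\<And>m. m < k \<Longrightarrow> f m = 1"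
    and at_lag: "f k = 1 - c"
    and step: "\<And>m. k \<le> m \<Longrightarrow> f (Suc m) = f m - e * f (m - k)"
    and nonneg: "\<And>m. 0 \<le> f m"
    and c_nonneg: "0 \<le> c" and c_le: "c \<le> 2 * e"
    and e_pos: "0 < e" and lag_pos: "1 \<le> k" and lag_small: "k * e \<le> 1/20"
begin

lemma e_le_lag: "e \<le> k * e"
  using mult_right_mono[of 1 "real k" e] lag_pos e_pos by simp

lemma e_le_one: "e \<le> 1"
  using e_le_lag lag_small by simp

lemma f_Suc_le: "f (Suc m) \<le> f m"
proof (cases "k \<le> m")
  case True
  then show ?thesis using step nonneg[of "m - k"] e_pos by simp
next
  case False
  then have "Suc m < k \<or> Suc m = k" by linarith
  then show ?thesis using initial[of m] initial[of "Suc m"] at_lag c_nonneg by auto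
qed

lemma f_antimono:
  assumes "m \<le> m'"
  shows "f m' \<le> f m"
proof -
  have "decseq f" by (rule decseq_SucI) (rule f_Suc_le)
  then show ?thesis using assms by (simp add: decseqD)
qed

lemma f_le_one: "f m \<le> 1"
  using f_antimono[of 0 m] initial[of 0] lag_pos by simp

lemma f_drop_le:
  assumes lag: "\<And>i. k \<le> i \<Longrightarrow> i < m \<Longrightarrow> f (i - k) \<le> (1 + 4 * (k * e)) * f i"
    and i: "m - k \<le> i" "i < m"
  shows "f i - f (Suc i) \<le> 2 * e * (1 + 4 * (k * e)) * f (m - k)"
proof (cases "k \<le> i")
  case True
  have "f i - f (Suc i) = e * f (i - k)" using step[OF True] by simp
  also have "\<dots> \<le> e * ((1 + 4 * (k * e)) * f i)" using lag[OF True i(2)] e_pos by simp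
  also have "\<dots> \<le> e * ((1 + 4 * (k * e)) * f (m - k))"
    using f_antimono[OF i(1)] e_pos by (simp add: mult_left_mono)
  also have "\<dots> \<le> 2 * e * (1 + 4 * (k * e)) * f (m - k)"
    using e_pos nonneg[of "m - k"] by simp
  finally show ?thesis .
next
  case False
  then consider "Suc i < k" | "Suc i = k" by linarith
  then show ?thesis
  proof cases
    case 1
    then show ?thesis using initial[of i] initial[of "Suc i"] e_pos nonneg[of "m - k"] by simp
  next
    case 2
    then have "f (m - k) = 1" using initial i by simp
    moreover have "2 * e * 1 \<le> 2 * e * (1 + 4 * (k * e))"
      using e_pos by (intro mult_left_mono) auto
    moreover note c_le
    ultimately show ?thesis using initial[of i] at_lag 2 by simp
  qed
qed

text \<open>Over a window of length k the sequence loses at most the fraction 2ke(1+4ke) of its value,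
  which keeps the lag ratio below 1+4ke inductively.\<close>

lemma f_lag_ratio: "k \<le> m \<Longrightarrow> f (m - k) \<le> (1 + 4 * (k * e)) * f m"
proof (induction m rule: less_induct)
  case (less m)
  define R where "R = 1 + 4 * (k * e)"
  have "f (m - k) - f m = (\<Sum>i = m - k..<m. f i - f (Suc i))"
    using sum_Suc_diff'[of "m - k" m f] by (simp add: sum_subtractf)
  also have "\<dots> \<le> (\<Sum>i = m - k..<m. 2 * e * R * f (m - k))"
    using f_drop_le[of m] less by (intro sum_mono) (auto simp: R_def)
  also have "\<dots> = k * (2 * e * R * f (m - k))" using less.prems by simp
  finally have "f (m - k) * (1 - 2 * (k * e) * R) \<le> f m" by (simp add: algebra_simps)
  then have "R * (f (m - k) * (1 - 2 * (k * e) * R)) \<le> R * f m"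
    using e_pos by (intro mult_left_mono) (simp_all add: R_def)
  moreover have "1 \<le> R * (1 - 2 * (k * e) * R)"
    using lag_factor_bound[of "k * e"] e_pos lag_small unfolding R_def by (simp add: mult.assoc)
  then have "f (m - k) \<le> f (m - k) * (R * (1 - 2 * (k * e) * R))"
    using nonneg[of "m - k"] by (simp add: mult_le_cancel_left1)
  ultimately show ?case unfolding R_def by (simp add: ac_simps)
qed

lemma f_upper: "f m \<le> (1 - e) ^ (m - k)"
proof (induction m)
  case 0
  then show ?case using f_le_one by simp
next
  case (Suc m)
  show ?case
  proof (cases "k \<le> m")
    case True
    have "e * f m \<le> e * f (m - k)" using f_antimono[of "m - k" m] e_pos by simp
    then have "f (Suc m) \<le> (1 - e) * f m" using step[OF True] by (simp add: algebra_simps)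
    also have "\<dots> \<le> (1 - e) * (1 - e) ^ (m - k)" using Suc e_le_one by (simp add: mult_left_mono)
    finally show ?thesis using True by (simp add: Suc_diff_le)
  next
    case False
    then show ?thesis using f_le_one[of "Suc m"] by simp
  qed
qed

lemma f_lower: "(1 - c) * (1 - e * (1 + 4 * (k * e))) ^ (m - k) \<le> f m"
proof (induction m)
  case 0
  then show ?case using initial[of 0] lag_pos c_nonneg by simp
next
  case (Suc m)
  define r where "r = e * (1 + 4 * (k * e))"
  have "e * (4 * k * e) \<le> 1 * (1/5)"
    using lag_small e_le_one e_pos by (intro mult_mono) auto
  then have "r \<le> 1" using e_le_lag lag_small by (simp add: r_def algebra_simps)
  show ?case
  proof (cases "k \<le> m")
    case True
    have "(1 - c) * (1 - r) ^ (Suc m - k) = (1 - r) * ((1 - c) * (1 - r) ^ (m - k))"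
      using True by (simp add: Suc_diff_le)
    also have "\<dots> \<le> (1 - r) * f m" using Suc \<open>r \<le> 1\<close> by (simp add: r_def mult_left_mono)
    also have "\<dots> \<le> f m - e * f (m - k)"
      using mult_left_mono[OF f_lag_ratio[OF True], of e] e_pos by (simp add: r_def algebra_simps)
    finally show ?thesis using step[OF True] by (simp add: r_def)
  next
    case False
    then consider "Suc m < k" | "Suc m = k" by linarith
    then show ?thesis
      using initial[of "Suc m"] at_lag c_nonneg c_le e_le_one lag_pos lag_small by cases auto
  qed
qed

end

lemma one_minus_power_le_exp:
  fixes e :: real
  assumes "0 \<le> e" "e \<le> 1"
  shows "(1 - e) ^ N \<le> exp (- (N * e))"
proof -
  have "(1 - e) ^ N \<le> exp (- e) ^ N"
    using assms exp_ge_add_one_self[of "- e"] by (intro power_mono) auto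
  then show ?thesis by (simp flip: exp_of_nat_mult)
qed

lemma exp_le_one_minus_power:
  fixes r :: real
  assumes "0 \<le> r" "r \<le> 1/2"
  shows "exp (- (N * (r + 2 * r\<^sup>2))) \<le> (1 - r) ^ N"
proof -
  have "exp (- (r + 2 * r\<^sup>2)) \<le> exp (ln (1 - r))"
    using ln_one_minus_pos_lower_bound[OF assms] by simp
  also have "\<dots> = 1 - r" using assms by simp
  finally have "exp (- (r + 2 * r\<^sup>2)) ^ N \<le> (1 - r) ^ N" by (intro power_mono) auto
  then show ?thesis by (metis exp_of_nat_mult mult_minus_right)
qed

definition decay_rate :: "nat \<Rightarrow> nat \<Rightarrow> real" where
  "decay_rate q k = (real q - 1) / real q ^ (k + 1)"

lemma run_avoiding_density_bounds:
  fixes q k :: nat and e :: real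
  defines "e \<equiv> decay_rate q k"
  assumes q: "q \<ge> 2" and k: "1 \<le> k" and small: "k * e \<le> 1/20"
  shows "real (run_avoiding q k m) / real q ^ m \<le> (1 - e) ^ (m - k)"
    and "(1 - 1 / real q ^ k) * (1 - e * (1 + 4 * (k * e))) ^ (m - k)
           \<le> real (run_avoiding q k m) / real q ^ m"
proof -
  define f where "f m = real (run_avoiding q k m) / real q ^ m" for m
  have q_pos: "real q > 0" using q by simp
  interpret lagged_decay f k "1 / real q ^ k" e
  proof
    show "f m = 1" if "m < k" for m
      using run_avoiding_short[OF that] q_pos by (simp add: f_def)
    show "f k = 1 - 1 / real q ^ k"
      using run_avoiding_self[of q k] q q_pos by (simp add: f_def of_nat_diff field_simps)
    show "f (Suc m) = f m - e * f (m - k)" if "k \<le> m" for m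
    proof -
      have "real (run_avoiding q k (Suc m) + (q - 1) * run_avoiding q k (m - k))
          = real (q * run_avoiding q k m)"
        using run_avoiding_recurrence[of q k m] q k that by simp
      then have "real (run_avoiding q k (Suc m))
          = real q * run_avoiding q k m - (real q - 1) * run_avoiding q k (m - k)"
        using q unfolding of_nat_add of_nat_mult by (simp add: of_nat_diff)
      moreover have "real q ^ m = real q ^ k * real q ^ (m - k)"
        using that by (simp flip: power_add)
      ultimately show ?thesis unfolding f_def e_def decay_rate_def using q_pos
        by (simp add: field_simps)
    qed
    have "real q \<le> 2 * (real q - 1)" using q by simp
    then show "1 / real q ^ k \<le> 2 * e"
      using q_pos by (simp add: e_def decay_rate_def field_simps)
  qed (use q k small in \<open>auto simp: f_def e_def decay_rate_def\<close>)
  show "real (run_avoiding q k m) / real q ^ m \<le> (1 - e) ^ (m - k)"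
    using f_upper by (simp add: f_def)
  show "(1 - 1 / real q ^ k) * (1 - e * (1 + 4 * (k * e))) ^ (m - k)
           \<le> real (run_avoiding q k m) / real q ^ m"
    using f_lower by (simp add: f_def)
qed

section \<open>Asymptotics of C_1\<close>

lemma C1_correction_eq:
  assumes q: "q \<ge> 2" and n: "n \<ge> 1" and k: "real k = \<lceil>log q (real n)\<rceil> + z"
  shows "real q powr ((log q (real n) - \<lceil>log q (real n)\<rceil>) - z
                   - log q (exp 1) * (real q - 1)
                     * real q powr ((log q (real n) - \<lceil>log q (real n)\<rceil>) - z - 1))
    = real n / real q ^ k / exp (real n * decay_rate q k)"
proof -
  define L where "L = log q (real n)"
  have q_pos: "real q > 0" using q by simp
  have qL: "real q powr L = real n" unfolding L_def using q n by simp
  have fraction: "real q powr (L - \<lceil>L\<rceil> - z) = real n / real q ^ k"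
  proof -
    have "L - \<lceil>L\<rceil> - z = L - real k" using k by (simp add: L_def)
    then have "real q powr (L - \<lceil>L\<rceil> - z) = real q powr L / real q powr real k"
      by (metis powr_diff)
    then show ?thesis using qL q_pos by (simp add: powr_realpow)
  qed
  have exponent: "(real q - 1) * real q powr (L - \<lceil>L\<rceil> - z - 1) = real n * decay_rate q k"
  proof -
    have "L - \<lceil>L\<rceil> - z - 1 = L - real (k + 1)" using k by (simp add: L_def)
    then have "real q powr (L - \<lceil>L\<rceil> - z - 1) = real q powr L / real q powr real (k + 1)"
      by (metis powr_diff)
    moreover have "real q powr real (k + 1) = real q ^ (k + 1)" using q_pos by (rule powr_realpow)
    ultimately show ?thesis using qL by (simp add: decay_rate_def)
  qed
  have "real q powr (log q (exp 1) * Y) = exp Y" for Y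
    using q by (simp add: powr_def log_def)
  moreover have "real q powr (L - \<lceil>L\<rceil> - z
        - log q (exp 1) * (real q - 1) * real q powr (L - \<lceil>L\<rceil> - z - 1))
      = real q powr (L - \<lceil>L\<rceil> - z) / real q powr (log q (exp 1) * (real n * decay_rate q k))"
    unfolding mult.assoc exponent by (rule powr_diff)
  ultimately show ?thesis using fraction unfolding L_def by simp
qed

definition C1_ratio :: "nat \<Rightarrow> int \<Rightarrow> nat \<Rightarrow> real" where
  "C1_ratio q z n = real (card (C1 n q (nat (\<lceil>log q (real n)\<rceil> + z))))
           / ((real q ^ n / real n) * ((real q - 1) / real q) ^ 2
              * real q powr ((log q (real n) - \<lceil>log q (real n)\<rceil>) - z
                   - log q (exp 1) * (real q - 1)
                     * real q powr ((log q (real n) - \<lceil>log q (real n)\<rceil>) - z - 1)))"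

lemma C1_ratio_eq:
  assumes q: "q \<ge> 2" and n: "n \<ge> 1" and k: "k = nat (\<lceil>log q (real n)\<rceil> + z)" "1 \<le> k"
    and kn: "k + 2 \<le> n"
  shows "C1_ratio q z n
    = real (run_avoiding q k (n - k - 2)) / real q ^ (n - k - 2) * exp (real n * decay_rate q k)"
proof -
  define m where "m = n - k - 2"
  have "real k = \<lceil>log q (real n)\<rceil> + z" using k by linarith
  note correction = C1_correction_eq[OF q n this]
  have "n = m + k + 2" using kn by (simp add: m_def)
  then have power_split: "real q ^ n = real q ^ m * real q ^ k * real q ^ 2" by (metis power_add)
  have card: "real (card (C1 n q k)) = (real q - 1) ^ 2 * run_avoiding q k m"
    using card_C1[OF k(2) kn] q by (simp add: m_def of_nat_diff)
  have cancel: "a\<^sup>2 * b / ((Qm * Qk * Q\<^sup>2 / N) * (a / Q)\<^sup>2 * ((N / Qk) / E)) = b / Qm * E"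
    if "a > 0" "Q > 0" "Qm > 0" "Qk > 0" "N > 0" "E > 0" for a b Q Qm Qk N E :: real
    using that by (simp add: field_simps power2_eq_square)
  show ?thesis
    unfolding C1_ratio_def k(1)[symmetric] correction m_def[symmetric] card power_split
    by (rule cancel) (use q n in auto)
qed

lemma n_decay_rate_le:
  assumes q: "q \<ge> 2" and n: "n \<ge> 1" and k: "log q (real n) + z \<le> real k"
  shows "real n * decay_rate q k \<le> real q powr (- z)"
proof -
  have q_pos: "real q > 0" using q by simp
  have "real n * real q powr z = real q powr (log q (real n) + z)"
    using q n by (simp add: powr_add)
  also have "\<dots> \<le> real q ^ k" using k q by (simp add: powr_realpow[symmetric])
  finally have "real n / real q ^ k \<le> real q powr (- z)"
    using q_pos by (simp add: powr_minus field_simps)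
  moreover have "decay_rate q k \<le> 1 / real q ^ k"
    using q_pos by (simp add: decay_rate_def field_simps)
  then have "real n * decay_rate q k \<le> real n / real q ^ k"
    using mult_left_mono[of _ _ "real n"] by fastforce
  ultimately show ?thesis by linarith
qed

lemma C1_ratio_le:
  fixes q n k :: nat and z :: int and e :: real
  defines "e \<equiv> decay_rate q k"
  assumes q: "q \<ge> 2" and n: "n \<ge> 1" and k: "k = nat (\<lceil>log q (real n)\<rceil> + z)" "1 \<le> k"
    and kn: "k + 2 \<le> n" and small: "k * e \<le> 1/20"
  shows "C1_ratio q z n \<le> exp (2 * (k * e) + 2 * e)"
proof -
  define m where "m = n - k - 2"
  have e_pos: "0 < e" using q by (simp add: e_def decay_rate_def)
  have "e \<le> k * e" using mult_right_mono[of 1 "real k" e] k(2) e_pos by simp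
  then have "e \<le> 1" using small by simp
  have "C1_ratio q z n = real (run_avoiding q k m) / real q ^ m * exp (n * e)"
    using C1_ratio_eq[OF q n k kn] by (simp add: m_def e_def)
  also have "\<dots> \<le> exp (- ((m - k) * e)) * exp (n * e)"
    using order_trans[OF run_avoiding_density_bounds(1)[OF q k(2), folded e_def, OF small]
        one_minus_power_le_exp[of e "m - k"]] e_pos \<open>e \<le> 1\<close>
    by (intro mult_right_mono) auto
  also have "\<dots> \<le> exp (2 * (k * e) + 2 * e)"
  proof -
    have "n \<le> 2 * k + 2 + (m - k)" unfolding m_def by linarith
    then have "real n - (m - k) \<le> 2 * k + 2" by linarith
    then have "(real n - (m - k)) * e \<le> (2 * k + 2) * e" using e_pos by (intro mult_right_mono) auto
    then show ?thesis by (simp flip: exp_add add: algebra_simps)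
  qed
  finally show ?thesis .
qed

lemma C1_ratio_ge:
  fixes q n k :: nat and z :: int and e :: real
  defines "e \<equiv> decay_rate q k"
  assumes q: "q \<ge> 2" and n: "n \<ge> 1" and k: "k = nat (\<lceil>log q (real n)\<rceil> + z)" "1 \<le> k"
    and kn: "k + 2 \<le> n" and small: "k * e \<le> 1/20"
  shows "(1 - 1 / real q ^ k) * exp (- (real q powr (- z)
           * (4 * (k * e) + 2 * e * (1 + 4 * (k * e))\<^sup>2))) \<le> C1_ratio q z n"
proof -
  define m where "m = n - k - 2"
  define r where "r = e * (1 + 4 * (k * e))"
  define X where "X = 4 * (k * e) + 2 * e * (1 + 4 * (k * e))\<^sup>2"
  have e_pos: "0 < e" using q by (simp add: e_def decay_rate_def)
  have "e \<le> k * e" using mult_right_mono[of 1 "real k" e] k(2) e_pos by simp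
  then have "e \<le> 1/20" using small by simp
  then have "r \<le> (1/20) * (1 + 4 * (1/20))" unfolding r_def
    using e_pos small by (intro mult_mono) auto
  then have r: "0 \<le> r" "r \<le> 1/2" using e_pos by (auto simp: r_def)
  have exponent: "- (real q powr (- z) * X) \<le> n * e - (m - k) * (r + 2 * r\<^sup>2)"
  proof -
    have "n * e \<le> real q powr (- z)"
      using n_decay_rate_le[OF q n] k by (simp add: e_def)
    moreover have "0 \<le> X" using e_pos by (simp add: X_def)
    ultimately have "n * e * X \<le> real q powr (- z) * X" by (rule mult_right_mono)
    moreover have "n * e - n * (r + 2 * r\<^sup>2) = - (n * e * X)"
      by (simp add: r_def X_def power2_eq_square algebra_simps)
    moreover have "n * (r + 2 * r\<^sup>2) \<ge> (m - k) * (r + 2 * r\<^sup>2)"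
      using r kn by (intro mult_right_mono) (auto simp: m_def)
    ultimately show ?thesis by linarith
  qed
  have "(1 - 1 / real q ^ k) * exp (- (real q powr (- z) * X))
      \<le> (1 - 1 / real q ^ k) * (exp (- ((m - k) * (r + 2 * r\<^sup>2))) * exp (n * e))"
    using exponent q by (intro mult_left_mono) (simp_all flip: exp_add)
  also have "\<dots> \<le> (1 - 1 / real q ^ k) * (1 - r) ^ (m - k) * exp (n * e)"
    using exp_le_one_minus_power[OF r, of "m - k"] q by (simp add: mult.assoc mult_left_mono)
  also have "\<dots> \<le> real (run_avoiding q k m) / real q ^ m * exp (n * e)"
    using run_avoiding_density_bounds(2)[OF q k(2), folded e_def, OF small, of m]
    by (intro mult_right_mono) (simp_all add: r_def)
  also have "\<dots> = C1_ratio q z n"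
    using C1_ratio_eq[OF q n k kn] by (simp add: m_def e_def)
  finally show ?thesis by (simp add: X_def)
qed

lemma decay_rate_tendsto_0:
  assumes "q \<ge> 2"
  shows "decay_rate q \<longlonglongrightarrow> 0"
proof -
  have "(\<lambda>k. (real q - 1) / real q * inverse (real q ^ k)) \<longlonglongrightarrow> (real q - 1) / real q * 0"
    using assms by (intro tendsto_intros LIMSEQ_inverse_realpow_zero) simp
  moreover have "(real q - 1) / real q * inverse (real q ^ k) = decay_rate q k" for k
    using assms by (simp add: decay_rate_def field_simps)
  ultimately show ?thesis by simp
qed

lemma lag_decay_rate_tendsto_0:
  assumes "q \<ge> 2"
  shows "(\<lambda>k. k * decay_rate q k) \<longlonglongrightarrow> 0"
proof -
  have "(\<lambda>k. (real q - 1) / real q * (real k / real q ^ k)) \<longlonglongrightarrow> (real q - 1) / real q * 0"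
    using assms by (intro tendsto_intros lim_n_over_pown) simp
  moreover have "(real q - 1) / real q * (real k / real q ^ k) = k * decay_rate q k" for k
    using assms by (simp add: decay_rate_def field_simps)
  ultimately show ?thesis by simp
qed

lemma eventually_le_log:
  fixes q :: nat and c :: real
  assumes "q \<ge> 2"
  shows "eventually (\<lambda>n. c \<le> log q (real n)) sequentially"
proof (rule eventually_sequentiallyI)
  fix n :: nat assume "nat \<lceil>real q powr c\<rceil> + 1 \<le> n"
  then have "real q powr c \<le> real n" by linarith
  then have "log q (real q powr c) \<le> log q (real n)" using assms by (intro log_mono) auto
  then show "c \<le> log q (real n)" using assms by simp
qed

lemma eventually_log_le:
  fixes q :: nat and c :: real
  assumes q: "q \<ge> 2"
  shows "eventually (\<lambda>n. log q (real n) + c \<le> real n) sequentially"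
proof -
  have ln_q: "ln (real q) > 0" using q by simp
  have "(\<lambda>n. ln (real n) / real n) \<longlonglongrightarrow> 0"
    by (rule filterlim_compose[OF ln_x_over_x_tendsto_0 filterlim_real_sequentially])
  moreover have "0 < ln (real q) / 2" using ln_q by simp
  ultimately have "eventually (\<lambda>n. ln (real n) / real n < ln q / 2) sequentially"
    by (rule order_tendstoD(2))
  moreover have "eventually (\<lambda>n. max 1 (2 * \<bar>c\<bar>) \<le> real n) sequentially"
    by (rule eventually_sequentiallyI[of "nat \<lceil>max 1 (2 * \<bar>c\<bar>)\<rceil>"]) linarith
  ultimately show ?thesis
  proof eventually_elim
    case (elim n)
    then have "ln (real n) < real n * ln q / 2" by (simp add: field_simps)
    then have "log q (real n) \<le> real n / 2" using ln_q by (simp add: log_def field_simps)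
    then show ?case using elim by linarith
  qed
qed

lemma tendsto_nat_ceiling_log:
  fixes q :: nat and z :: int
  assumes "q \<ge> 2"
  shows "filterlim (\<lambda>n. nat (\<lceil>log q (real n)\<rceil> + z)) at_top sequentially"
  unfolding filterlim_at_top
proof
  fix Z :: nat
  show "eventually (\<lambda>n. Z \<le> nat (\<lceil>log q (real n)\<rceil> + z)) sequentially"
    using eventually_le_log[OF assms, of "Z - z"]
  proof eventually_elim
    case (elim n)
    then have "int Z \<le> \<lceil>log q (real n)\<rceil> + z" using le_of_int_ceiling[of "log q (real n)"] by linarith
    then show ?case by (metis nat_int nat_mono)
  qed
qed

lemma eventually_admissible:
  fixes q :: nat and z :: int and kf :: "nat \<Rightarrow> nat"
  assumes q: "q \<ge> 2"
  defines "kf \<equiv> \<lambda>n. nat (\<lceil>log q (real n)\<rceil> + z)"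
  shows "eventually (\<lambda>n. 1 \<le> n \<and> 1 \<le> kf n \<and> kf n + 2 \<le> n
           \<and> kf n * decay_rate q (kf n) \<le> 1/20) sequentially"
proof -
  have kf_top: "filterlim kf at_top sequentially"
    unfolding kf_def by (rule tendsto_nat_ceiling_log[OF q])
  have "eventually (\<lambda>k. real k * decay_rate q k < 1/20) sequentially"
    using lag_decay_rate_tendsto_0[OF q] by (rule order_tendstoD) simp
  then have small: "eventually (\<lambda>n. kf n * decay_rate q (kf n) \<le> 1/20) sequentially"
    by (rule eventually_compose_filterlim[OF eventually_mono kf_top]) auto
  have "eventually (\<lambda>n. kf n + 2 \<le> n) sequentially"
    using eventually_log_le[OF q, of "z + 3"] eventually_ge_at_top[of 2]
  proof eventually_elim
    case (elim n)
    have "real (kf n) \<le> max 0 (log q (real n) + z + 1)" unfolding kf_def by linarith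
    then have "real (kf n + 2) \<le> real n" using elim by simp
    then show ?case by (simp only: of_nat_le_iff)
  qed
  moreover have "eventually (\<lambda>n. 1 \<le> kf n) sequentially"
    using kf_top by (simp add: filterlim_at_top)
  ultimately show ?thesis
    using small eventually_ge_at_top[of 1] by eventually_elim auto
qed

lemma C1_ratio_bounds_tendsto:
  fixes q :: nat and z :: int
  assumes "q \<ge> 2"
  shows "(\<lambda>k. exp (2 * (k * decay_rate q k) + 2 * decay_rate q k)) \<longlonglongrightarrow> 1"
    and "(\<lambda>k. (1 - 1 / real q ^ k) * exp (- (real q powr (- z)
           * (4 * (k * decay_rate q k) + 2 * decay_rate q k * (1 + 4 * (k * decay_rate q k))\<^sup>2))))
         \<longlonglongrightarrow> 1"
proof -
  have inverse_power: "(\<lambda>k. 1 / real q ^ k) \<longlonglongrightarrow> 0"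
    using LIMSEQ_inverse_realpow_zero[of "real q"] assms by (simp add: inverse_eq_divide)
  note decay = lag_decay_rate_tendsto_0[OF assms] decay_rate_tendsto_0[OF assms]
  have "(\<lambda>k. exp (2 * (k * decay_rate q k) + 2 * decay_rate q k)) \<longlonglongrightarrow> exp (2 * 0 + 2 * 0)"
    by (intro tendsto_intros decay)
  then show "(\<lambda>k. exp (2 * (k * decay_rate q k) + 2 * decay_rate q k)) \<longlonglongrightarrow> 1" by simp
  have "(\<lambda>k. (1 - 1 / real q ^ k) * exp (- (real q powr (- z)
           * (4 * (k * decay_rate q k) + 2 * decay_rate q k * (1 + 4 * (k * decay_rate q k))\<^sup>2))))
      \<longlonglongrightarrow> (1 - 0) * exp (- (real q powr (- z) * (4 * 0 + 2 * 0 * (1 + 4 * 0)\<^sup>2)))"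
    by (intro tendsto_intros decay inverse_power)
  then show "(\<lambda>k. (1 - 1 / real q ^ k) * exp (- (real q powr (- z)
           * (4 * (k * decay_rate q k) + 2 * decay_rate q k * (1 + 4 * (k * decay_rate q k))\<^sup>2))))
      \<longlonglongrightarrow> 1" by simp
qed

theorem lemma6:
  fixes q :: nat and z :: int
  assumes "q \<ge> 2"
  shows "(\<lambda>n. real (card (C1 n q (nat (\<lceil>log q (real n)\<rceil> + z))))
           / ((real q ^ n / real n) * ((real q - 1) / real q) ^ 2
              * real q powr ((log q (real n) - \<lceil>log q (real n)\<rceil>) - z
                   - log q (exp 1) * (real q - 1)
                     * real q powr ((log q (real n) - \<lceil>log q (real n)\<rceil>) - z - 1))))
         \<longlonglongrightarrow> 1"
proof -
  define kf where "kf n = nat (\<lceil>log q (real n)\<rceil> + z)" for n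
  have "filterlim kf at_top sequentially"
    unfolding kf_def[abs_def] by (rule tendsto_nat_ceiling_log[OF assms])
  note limits = C1_ratio_bounds_tendsto(2)[OF assms, of z, THEN filterlim_compose, OF this]
    C1_ratio_bounds_tendsto(1)[OF assms, THEN filterlim_compose, OF this]
  have "eventually (\<lambda>n. 1 \<le> n \<and> 1 \<le> kf n \<and> kf n + 2 \<le> n
      \<and> kf n * decay_rate q (kf n) \<le> 1/20) sequentially"
    using eventually_admissible[OF assms, of z] by (simp add: kf_def)
  then have "eventually (\<lambda>n. (1 - 1 / real q ^ kf n) * exp (- (real q powr (- z)
        * (4 * (kf n * decay_rate q (kf n))
          + 2 * decay_rate q (kf n) * (1 + 4 * (kf n * decay_rate q (kf n)))\<^sup>2)))
      \<le> C1_ratio q z n) sequentially"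
    and "eventually (\<lambda>n. C1_ratio q z n
      \<le> exp (2 * (kf n * decay_rate q (kf n)) + 2 * decay_rate q (kf n))) sequentially"
    by (eventually_elim, blast intro: C1_ratio_ge[OF assms _ kf_def] C1_ratio_le[OF assms _ kf_def])+
  from tendsto_sandwich[OF this limits] show ?thesis unfolding C1_ratio_def[abs_def] .
qed

end
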